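(* Let $\nu>0$ and let $K\in\mathbb N$ be fixed, with index set $\mathcal K=\{(k_1,k_2)\in\mathbb Z^2\setminus\{0\}: -K\le k_1,k_2\le K\}$. Let $f$ be a real, $2\pi$-periodic, divergence-free, mean-zero body force on $[0,2\pi]^2$ whose Fourier coefficients vanish outside $\{k\in\mathcal K: |k|^2\le \lambda_M\}$ for some $\lambda_M\ge 1$. Let $g=\operatorname{curl} f$ with Fourier coefficients $g_k$, and set $\lambda_0=\min\{|k|^2:k\in\mathcal K\}=1$. For a real trigonometric polynomial $\omega(x)=\sum_{k\in\mathcal K}\omega_k e^{ik\cdot x}$ (so $\omega_{-k}=\overline{\omega_k}$) define $u(x)=\sum_{k\in\mathcal K}\frac{i(k_2,-k_1)}{|k|^2}\omega_k e^{ik\cdot x}$ and $|\omega|^2=\|\omega\|_{L^2}^2=4\pi^2\sum_{k\in\mathcal K}|\omega_k|^2$. For a time step $h>0$ define the map $S$ by $$S(\omega)_k=\big\{\omega_k-h\,(u\cdot\nabla\omega)_k\big\}e^{-\nu|k|^2h}+\frac{2g_k}{\nu|k|^2}e^{-\nu|k|^2h/2}\sinh(\nu|k|^2h/2),\qquad k\in\mathcal K,$$ where $(u\cdot\nabla\omega)_k$ denotes the $k$-th Fourier coefficient of $u\cdot\nabla\omega$ (only $k\in\mathcal K$ are retained), and let $\omega^{n+1}=S(\omega^n)$ for $n=0,1,2,\dots$. Let $$B=c_0\frac{\|f\|_{L^2}}{\nu\lambda_0^{1/2}}\qquad\text{with}\qquad c_0>6\lambda_M/\lambda_0 .$$ Then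 for every $L>0$ there exist $h>0$ sufficiently small and $N\in\mathbb N$ sufficiently large (depending on $L$, $K$, $\nu$, $\lambda_M$, $c_0$, $f$) such that for every initial datum $\omega^0$ with $|\omega^0|<L$ one has $|\omega^n|<B$ for all $n\ge N$.
   Context: This is a fully dealiased spectral Galerkin discretization of the two-dimensional incompressible Navier–Stokes equations in vorticity form $\partial_t\omega-\nu\Delta\omega+u\cdot\nabla\omega=g$ on the $2\pi$-periodic box, with linear terms integrated exactly in time and the nonlinear term by the forward Euler method. Here $\operatorname{curl}u=\partial u_2/\partial x_1-\partial u_1/\partial x_2$. *)

theory Defs
  imports "HOL-Analysis.Analysis"
begin

definition Kset :: "nat \<Rightarrow> (int \<times> int) set" where
  "Kset K = {k. k \<noteq> (0,0) \<and> \<bar>fst k\<bar> \<le> int K \<and> \<bar>snd k\<bar> \<le> int K}"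

definition ksq :: "int \<times> int \<Rightarrow> real" where
  "ksq k = real_of_int (fst k ^ 2 + snd k ^ 2)"

definition kneg :: "int \<times> int \<Rightarrow> int \<times> int" where
  "kneg k = (- fst k, - snd k)"

definition lambda0 :: "nat \<Rightarrow> real" where
  "lambda0 K = Min (ksq ` Kset K)"

text \<open>A body force is given by its Fourier coefficients f_k in C^2 (both components).
  Admissible: real, divergence-free, mean-zero, supported in {k in \<K> : |k|^2 <= lambda_M}.\<close>
definition force_ok :: "nat \<Rightarrow> real \<Rightarrow> (int \<times> int \<Rightarrow> complex \<times> complex) \<Rightarrow> bool" where
  "force_ok K lamM f \<longleftrightarrow>
     (\<forall>k. (k \<notin> Kset K \<or> ksq k > lamM) \<longrightarrow> f k = (0, 0)) \<and>
     f (0,0) = (0,0) \<and>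
     (\<forall>k. f (kneg k) = (cnj (fst (f k)), cnj (snd (f k)))) \<and>
     (\<forall>k. of_int (fst k) * fst (f k) + of_int (snd k) * snd (f k) = 0)"

text \<open>||f||_{L^2} on [0,2pi]^2 via Parseval.\<close>
definition force_norm :: "nat \<Rightarrow> (int \<times> int \<Rightarrow> complex \<times> complex) \<Rightarrow> real" where
  "force_norm K f = 2 * pi * sqrt (\<Sum>k\<in>Kset K. (cmod (fst (f k)))\<^sup>2 + (cmod (snd (f k)))\<^sup>2)"

definition curl_coef :: "(int \<times> int \<Rightarrow> complex \<times> complex) \<Rightarrow> int \<times> int \<Rightarrow> complex" where
  "curl_coef f k = \<i> * of_int (fst k) * snd (f k) - \<i> * of_int (snd k) * fst (f k)"

definition trig_poly :: "nat \<Rightarrow> (int \<times> int \<Rightarrow> complex) \<Rightarrow> bool" where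
  "trig_poly K \<omega> \<longleftrightarrow> (\<forall>k. k \<notin> Kset K \<longrightarrow> \<omega> k = 0) \<and> (\<forall>k. \<omega> (kneg k) = cnj (\<omega> k))"

definition vnorm :: "nat \<Rightarrow> (int \<times> int \<Rightarrow> complex) \<Rightarrow> real" where
  "vnorm K \<omega> = sqrt (4 * pi\<^sup>2 * (\<Sum>k\<in>Kset K. (cmod (\<omega> k))\<^sup>2))"

definition vel1 :: "(int \<times> int \<Rightarrow> complex) \<Rightarrow> int \<times> int \<Rightarrow> complex" where
  "vel1 \<omega> k = \<i> * of_int (snd k) / of_real (ksq k) * \<omega> k"
definition vel2 :: "(int \<times> int \<Rightarrow> complex) \<Rightarrow> int \<times> int \<Rightarrow> complex" where
  "vel2 \<omega> k = \<i> * of_int (- fst k) / of_real (ksq k) * \<omega> k"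

definition nonlin :: "nat \<Rightarrow> (int \<times> int \<Rightarrow> complex) \<Rightarrow> int \<times> int \<Rightarrow> complex" where
  "nonlin K \<omega> m = (\<Sum>k\<in>Kset K. \<Sum>l\<in>Kset K.
      if fst k + fst l = fst m \<and> snd k + snd l = snd m
      then vel1 \<omega> k * (\<i> * of_int (fst l) * \<omega> l) + vel2 \<omega> k * (\<i> * of_int (snd l) * \<omega> l)
      else 0)"

definition stepS :: "nat \<Rightarrow> real \<Rightarrow> (int \<times> int \<Rightarrow> complex) \<Rightarrow> real \<Rightarrow>
    (int \<times> int \<Rightarrow> complex) \<Rightarrow> (int \<times> int \<Rightarrow> complex)" where
  "stepS K \<nu> g h \<omega> = (\<lambda>k. if k \<in> Kset K then
      (\<omega> k - of_real h * nonlin K \<omega> k) * of_real (exp (- \<nu> * ksq k * h))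
      + 2 * g k / of_real (\<nu> * ksq k) * of_real (exp (- \<nu> * ksq k * h / 2) * sinh (\<nu> * ksq k * h / 2))
    else 0)"

end

theory Submission
  imports Defs
begin

text \<open>
  In triad form, the m-th coefficient of the nonlinear term is the sum over k + l = m of
  (k \<times> l)/|k|^2 \<omega>_k \<omega>_l, and the coefficient changes sign under l \<mapsto> -(k + l).
  Hence \<Sum>_m conj(\<omega>_m) (u\<cdot>\<nabla>\<omega>)_m = 0 (the Galerkin truncation conserves enstrophy),
  and the explicit Euler step satisfies
  |\<omega> - h u\<cdot>\<nabla>\<omega>|^2 = |\<omega>|^2 + h^2 |u\<cdot>\<nabla>\<omega>|^2 \<le> |\<omega>|^2 (1 + C h^2 |\<omega>|^2).
  As |k|^2 \<ge> 1, the viscous factor damps by at least exp(-\<nu>h), and the exactly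
  integrated forcing adds at most h|g|. So on the ball of radius R, for h small
  compared with \<nu>/(C R^2), one gets |S \<omega>| \<le> (1 - \<nu>h/2) |\<omega>| + h|g|: the ball is
  invariant and the iterates approach the radius 2|g|/\<nu> geometrically. Finally
  |g| \<le> 2 \<lambda>_M \<parallel>f\<parallel> and \<lambda>_0 = 1, so 2|g|/\<nu> < B.
\<close>

lemma finite_Kset [simp]: "finite (Kset K)"
proof -
  have "Kset K \<subseteq> {-int K..int K} \<times> {-int K..int K}"
    unfolding Kset_def by auto
  then show ?thesis by (rule finite_subset) auto
qed

lemma ksq_ge_1: "k \<in> Kset K \<Longrightarrow> 1 \<le> ksq k"
proof -
  assume "k \<in> Kset K"
  then have "fst k \<noteq> 0 \<or> snd k \<noteq> 0" unfolding Kset_def by (cases k) auto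
  then have "1 \<le> fst k ^ 2 + snd k ^ 2"
    by (smt (verit) power2_less_eq_zero_iff zero_le_power2 zero_less_power2 int_one_le_iff_zero_less)
  then show ?thesis unfolding ksq_def by linarith
qed

lemma kneg_eq_uminus: "kneg k = - k"
  unfolding kneg_def by (simp add: prod_eq_iff)

lemma uminus_in_Kset_iff [simp]: "- k \<in> Kset K \<longleftrightarrow> k \<in> Kset K"
  unfolding Kset_def by (auto simp: prod_eq_iff)

lemma ksq_uminus [simp]: "ksq (- k) = ksq k"
  unfolding ksq_def by simp

lemma sum_Kset_uminus: "(\<Sum>k\<in>Kset K. F (- k)) = (\<Sum>k\<in>Kset K. F k)"
  by (rule sum.reindex_bij_witness[where i = uminus and j = uminus]) auto

lemma int_abs_le_square: "\<bar>a :: int\<bar> \<le> a\<^sup>2"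
proof (cases "a = 0")
  case False
  then have "\<bar>a\<bar> * 1 \<le> \<bar>a\<bar> * \<bar>a\<bar>" by (intro mult_left_mono) auto
  then show ?thesis by (simp add: power2_eq_square)
qed simp

definition triad_coef :: "int \<times> int \<Rightarrow> int \<times> int \<Rightarrow> real" where
  "triad_coef k l = real_of_int (fst k * snd l - snd k * fst l) / ksq k"

lemma triad_coef_uminus [simp]: "triad_coef (- k) (- l) = triad_coef k l"
  unfolding triad_coef_def by simp

lemma triad_coef_antisym: "triad_coef k (- k - l) = - triad_coef k l"
  unfolding triad_coef_def by (simp add: algebra_simps minus_divide_left)

lemma abs_triad_coef_le:
  assumes "k \<in> Kset K" "l \<in> Kset K"
  shows "\<bar>triad_coef k l\<bar> \<le> 2 * real K ^ 2"
proof -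
  have "\<bar>fst k\<bar> \<le> int K" "\<bar>snd k\<bar> \<le> int K" "\<bar>fst l\<bar> \<le> int K" "\<bar>snd l\<bar> \<le> int K"
    using assms unfolding Kset_def by auto
  then have "\<bar>fst k * snd l\<bar> \<le> int K * int K" "\<bar>snd k * fst l\<bar> \<le> int K * int K"
    unfolding abs_mult by (intro mult_mono; simp)+
  then have "\<bar>fst k * snd l - snd k * fst l\<bar> \<le> 2 * int K ^ 2"
    by (simp add: power2_eq_square)
  then have num: "\<bar>real_of_int (fst k * snd l - snd k * fst l)\<bar> \<le> 2 * real K ^ 2"
    using of_int_le_iff[where 'a = real, THEN iffD2] by fastforce
  have q: "1 \<le> ksq k" using ksq_ge_1 assms(1) .
  have "\<bar>triad_coef k l\<bar> = \<bar>real_of_int (fst k * snd l - snd k * fst l)\<bar> / ksq k"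
    unfolding triad_coef_def using q by simp
  also have "\<dots> \<le> \<bar>real_of_int (fst k * snd l - snd k * fst l)\<bar> / 1"
    using q by (intro divide_left_mono) auto
  finally show ?thesis using num by simp
qed

lemma trig_poly_uminus: "trig_poly K \<omega> \<Longrightarrow> \<omega> (- k) = cnj (\<omega> k)"
  unfolding trig_poly_def kneg_eq_uminus by blast

lemma trig_poly_cnj: "trig_poly K \<omega> \<Longrightarrow> cnj (\<omega> k) = \<omega> (- k)"
  using trig_poly_uminus[of K \<omega> k] by simp

lemma trig_poly_outside: "trig_poly K \<omega> \<Longrightarrow> k \<notin> Kset K \<Longrightarrow> \<omega> k = 0"
  unfolding trig_poly_def by blast

lemma nonlin_eq_triad_sum:
  "nonlin K \<omega> m = (\<Sum>k\<in>Kset K. \<Sum>l\<in>Kset K.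
     if k + l = m then of_real (triad_coef k l) * \<omega> k * \<omega> l else 0)"
  unfolding nonlin_def
proof (intro sum.cong refl)
  fix k l assume "k \<in> Kset K"
  then have "ksq k \<noteq> 0" using ksq_ge_1[of k K] by linarith
  then show "(if fst k + fst l = fst m \<and> snd k + snd l = snd m
        then vel1 \<omega> k * (\<i> * of_int (fst l) * \<omega> l) + vel2 \<omega> k * (\<i> * of_int (snd l) * \<omega> l) else 0) =
      (if k + l = m then of_real (triad_coef k l) * \<omega> k * \<omega> l else 0)"
    unfolding triad_coef_def vel1_def vel2_def by (auto simp: prod_eq_iff field_simps)
qed

lemma nonlin_uminus:
  assumes "trig_poly K \<omega>"
  shows "nonlin K \<omega> (- m) = cnj (nonlin K \<omega> m)"
proof -
  have neg_add_eq_iff: "- k - l = - m \<longleftrightarrow> k + l = m" for k l :: "int \<times> int"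
    by (auto simp: prod_eq_iff)
  have "nonlin K \<omega> (- m) = (\<Sum>k\<in>Kset K. \<Sum>l\<in>Kset K.
      if - k + - l = - m then of_real (triad_coef (- k) (- l)) * \<omega> (- k) * \<omega> (- l) else 0)"
    unfolding nonlin_eq_triad_sum
    by (subst sum_Kset_uminus[symmetric], rule sum.cong, rule refl, subst sum_Kset_uminus[symmetric], rule refl)
  also have "\<dots> = cnj (nonlin K \<omega> m)"
    unfolding nonlin_eq_triad_sum cnj_sum
    by (intro sum.cong refl) (simp add: trig_poly_uminus[OF assms] neg_add_eq_iff)
  finally show ?thesis .
qed

lemma triad_sum_cancels:
  assumes "trig_poly K \<omega>"
  shows "(\<Sum>l\<in>Kset K. cnj (\<omega> (k + l)) * (of_real (triad_coef k l) * \<omega> k * \<omega> l)) = 0"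
proof -
  define \<sigma> where "\<sigma> l = - k - l" for l
  define F where "F l = \<omega> (\<sigma> l) * (of_real (triad_coef k l) * \<omega> k * \<omega> l)" for l
  define S where "S = {l \<in> Kset K. \<sigma> l \<in> Kset K}"
  have \<sigma>\<sigma>: "\<sigma> (\<sigma> l) = l" for l unfolding \<sigma>_def by simp
  have F\<sigma>: "F (\<sigma> l) = - F l" for l
    unfolding F_def \<sigma>\<sigma> by (simp add: \<sigma>_def triad_coef_antisym algebra_simps)
  have "(\<Sum>l\<in>Kset K. cnj (\<omega> (k + l)) * (of_real (triad_coef k l) * \<omega> k * \<omega> l)) = sum F (Kset K)"
    unfolding F_def \<sigma>_def by (simp add: trig_poly_cnj[OF assms])
  also have "\<dots> = sum F S"
    by (rule sum.mono_neutral_right) (auto simp: S_def F_def trig_poly_outside[OF assms])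
  also have "\<dots> = 0"
  proof -
    have "sum F S = sum (\<lambda>l. F (\<sigma> l)) S"
      by (rule sum.reindex_bij_witness[where i = \<sigma> and j = \<sigma>]) (auto simp: S_def \<sigma>\<sigma>)
    then show ?thesis by (simp add: F\<sigma> sum_negf)
  qed
  finally show ?thesis .
qed

lemma nonlin_orthogonal:
  assumes "trig_poly K \<omega>"
  shows "(\<Sum>m\<in>Kset K. cnj (\<omega> m) * nonlin K \<omega> m) = 0"
proof -
  have "(\<Sum>m\<in>Kset K. cnj (\<omega> m) * nonlin K \<omega> m) =
     (\<Sum>k\<in>Kset K. \<Sum>l\<in>Kset K. \<Sum>m\<in>Kset K.
        if k + l = m then cnj (\<omega> m) * (of_real (triad_coef k l) * \<omega> k * \<omega> l) else 0)"
    unfolding nonlin_eq_triad_sum sum_distrib_left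
    by (subst sum.swap, rule sum.cong, rule refl, subst sum.swap) (intro sum.cong refl; simp)
  also have "\<dots> = (\<Sum>k\<in>Kset K. \<Sum>l\<in>Kset K. cnj (\<omega> (k + l)) * (of_real (triad_coef k l) * \<omega> k * \<omega> l))"
    by (intro sum.cong refl) (auto simp: trig_poly_outside[OF assms])
  also have "\<dots> = 0" by (intro sum.neutral ballI triad_sum_cancels[OF assms])
  finally show ?thesis .
qed

lemma trig_poly_stepS:
  assumes "trig_poly K \<omega>" and "\<And>k. g (- k) = cnj (g k)"
  shows "trig_poly K (stepS K \<nu> g h \<omega>)"
  unfolding trig_poly_def kneg_eq_uminus
proof (intro conjI allI impI)
  fix k
  show "k \<notin> Kset K \<Longrightarrow> stepS K \<nu> g h \<omega> k = 0" unfolding stepS_def by simp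
  show "stepS K \<nu> g h \<omega> (- k) = cnj (stepS K \<nu> g h \<omega> k)"
    unfolding stepS_def by (simp add: nonlin_uminus[OF assms(1)] trig_poly_uminus[OF assms(1)] assms(2))
qed

definition coef_norm :: "nat \<Rightarrow> (int \<times> int \<Rightarrow> complex) \<Rightarrow> real" where
  "coef_norm K \<omega> = L2_set (\<lambda>k. cmod (\<omega> k)) (Kset K)"

lemma coef_norm_nonneg [simp]: "0 \<le> coef_norm K \<omega>"
  unfolding coef_norm_def by simp

lemma coef_norm_sq: "(coef_norm K \<omega>)\<^sup>2 = (\<Sum>k\<in>Kset K. (cmod (\<omega> k))\<^sup>2)"
  unfolding coef_norm_def L2_set_def by (simp add: sum_nonneg)

lemma vnorm_eq_coef_norm: "vnorm K \<omega> = 2 * pi * coef_norm K \<omega>"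
proof -
  have "4 * pi\<^sup>2 = (2 * pi)\<^sup>2" by (simp add: power2_eq_square)
  then show ?thesis
    unfolding vnorm_def coef_norm_def L2_set_def by (simp add: real_sqrt_mult)
qed

lemma coef_norm_euler_step:
  assumes "trig_poly K \<omega>"
  shows "(coef_norm K (\<lambda>k. \<omega> k - of_real h * nonlin K \<omega> k))\<^sup>2
    = (coef_norm K \<omega>)\<^sup>2 + h\<^sup>2 * (coef_norm K (nonlin K \<omega>))\<^sup>2"
proof -
  have cross: "(\<Sum>k\<in>Kset K. Re (cnj (\<omega> k) * nonlin K \<omega> k)) = 0"
    using nonlin_orthogonal[OF assms] by (metis Re_sum zero_complex.sel(1))
  have expand: "(cmod (a - of_real h * b))\<^sup>2
      = (cmod a)\<^sup>2 - 2 * h * Re (cnj a * b) + h\<^sup>2 * (cmod b)\<^sup>2" for a b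
    unfolding cmod_power2 by (simp add: power2_eq_square algebra_simps)
  have "(coef_norm K (\<lambda>k. \<omega> k - of_real h * nonlin K \<omega> k))\<^sup>2
      = (\<Sum>k\<in>Kset K. (cmod (\<omega> k))\<^sup>2 - 2 * h * Re (cnj (\<omega> k) * nonlin K \<omega> k)
          + h\<^sup>2 * (cmod (nonlin K \<omega> k))\<^sup>2)"
    unfolding coef_norm_sq expand ..
  also have "\<dots> = (coef_norm K \<omega>)\<^sup>2 + h\<^sup>2 * (coef_norm K (nonlin K \<omega>))\<^sup>2"
    unfolding sum.distrib sum_subtractf coef_norm_sq
    by (simp only: sum_distrib_left[symmetric] cross)
  finally show ?thesis .
qed

definition nonlin_const :: "nat \<Rightarrow> real" where
  "nonlin_const K = sqrt (card (Kset K)) * real (card (Kset K)) ^ 2 * (2 * real K ^ 2)"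

lemma coef_norm_nonlin_le: "coef_norm K (nonlin K \<omega>) \<le> nonlin_const K * (coef_norm K \<omega>)\<^sup>2"
proof -
  let ?r = "coef_norm K \<omega>" and ?c = "real (card (Kset K)) ^ 2 * (2 * real K ^ 2)"
  have mode_le: "cmod (\<omega> k) \<le> ?r" if "k \<in> Kset K" for k
    unfolding coef_norm_def by (rule member_le_L2_set) (simp_all add: that)
  have "cmod (nonlin K \<omega> m) \<le> ?c * ?r\<^sup>2" for m
  proof -
    have "cmod (nonlin K \<omega> m) \<le> (\<Sum>k\<in>Kset K. \<Sum>l\<in>Kset K.
        cmod (if k + l = m then of_real (triad_coef k l) * \<omega> k * \<omega> l else 0))"
      unfolding nonlin_eq_triad_sum by (rule order_trans[OF norm_sum sum_mono[OF norm_sum]])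
    also have "\<dots> \<le> (\<Sum>k\<in>Kset K. \<Sum>l\<in>Kset K. 2 * real K ^ 2 * (?r * ?r))"
    proof (intro sum_mono)
      fix k l assume k: "k \<in> Kset K" and l: "l \<in> Kset K"
      have "cmod (\<omega> k) * cmod (\<omega> l) \<le> ?r * ?r"
        using mode_le[OF k] mode_le[OF l] by (intro mult_mono) simp_all
      then have "\<bar>triad_coef k l\<bar> * (cmod (\<omega> k) * cmod (\<omega> l)) \<le> 2 * real K ^ 2 * (?r * ?r)"
        by (intro mult_mono[OF abs_triad_coef_le[OF k l]]) simp_all
      then show "cmod (if k + l = m then of_real (triad_coef k l) * \<omega> k * \<omega> l else 0)
          \<le> 2 * real K ^ 2 * (?r * ?r)"
        by (auto simp: norm_mult mult.assoc)
    qed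
    also have "\<dots> = ?c * ?r\<^sup>2" by (simp add: power2_eq_square)
    finally show ?thesis .
  qed
  then have "coef_norm K (nonlin K \<omega>) \<le> L2_set (\<lambda>_. ?c * ?r\<^sup>2) (Kset K)"
    unfolding coef_norm_def by (intro L2_set_mono) auto
  also have "\<dots> = nonlin_const K * ?r\<^sup>2"
    unfolding L2_set_constant nonlin_const_def by simp
  finally show ?thesis .
qed

lemma norm_forcing_term_le:
  fixes a h :: real
  assumes "0 < a" and "0 \<le> h"
  shows "cmod (2 * z / of_real a * of_real (exp (- a * h / 2) * sinh (a * h / 2))) \<le> h * cmod z"
proof -
  have "exp (- a * h / 2) * sinh (a * h / 2) = (1 - exp (- (a * h))) / 2"
    by (simp add: sinh_field_def field_simps flip: exp_add)
  then have "cmod (2 * z / of_real a * of_real (exp (- a * h / 2) * sinh (a * h / 2)))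
      = cmod z * (1 - exp (- (a * h))) / a"
    using assms by (simp add: norm_mult norm_divide)
  also have "\<dots> \<le> cmod z * (a * h) / a"
    using assms exp_ge_add_one_self[of "- (a * h)"] by (intro divide_right_mono mult_left_mono) auto
  also have "\<dots> = h * cmod z" using assms by simp
  finally show ?thesis .
qed

lemma coef_norm_stepS_le:
  assumes "0 < \<nu>" and "0 < h"
  shows "coef_norm K (stepS K \<nu> g h \<omega>)
    \<le> exp (- \<nu> * h) * coef_norm K (\<lambda>k. \<omega> k - of_real h * nonlin K \<omega> k) + h * coef_norm K g"
proof -
  define a where "a k = \<omega> k - of_real h * nonlin K \<omega> k" for k
  have mode_le: "cmod (stepS K \<nu> g h \<omega> k) \<le> exp (- \<nu> * h) * cmod (a k) + h * cmod (g k)"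
    if k: "k \<in> Kset K" for k
  proof -
    have q: "1 \<le> ksq k" using ksq_ge_1 k .
    then have "exp (- \<nu> * ksq k * h) \<le> exp (- \<nu> * h)"
      using assms by (simp add: mult.commute mult.left_commute mult_le_cancel_left1)
    then have "cmod (a k * of_real (exp (- \<nu> * ksq k * h))) \<le> exp (- \<nu> * h) * cmod (a k)"
      by (simp add: norm_mult mult.commute mult_left_mono)
    moreover have "cmod (2 * g k / of_real (\<nu> * ksq k)
        * of_real (exp (- \<nu> * ksq k * h / 2) * sinh (\<nu> * ksq k * h / 2))) \<le> h * cmod (g k)"
      using norm_forcing_term_le[of "\<nu> * ksq k" h "g k"] q assms by simp
    ultimately show ?thesis
      unfolding stepS_def a_def[symmetric] using k norm_triangle_ineq by (smt (verit))
  qed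
  have "coef_norm K (stepS K \<nu> g h \<omega>)
      \<le> L2_set (\<lambda>k. exp (- \<nu> * h) * cmod (a k) + h * cmod (g k)) (Kset K)"
    unfolding coef_norm_def by (rule L2_set_mono) (use mode_le in auto)
  also have "\<dots> \<le> exp (- \<nu> * h) * coef_norm K a + h * coef_norm K g"
    using L2_set_triangle_ineq assms unfolding coef_norm_def by (simp add: L2_set_right_distrib)
  finally show ?thesis unfolding a_def .
qed

lemma exp_damping_le:
  fixes a e :: real
  assumes "0 \<le> e" and "e \<le> a * (1 - a) / 2"
  shows "exp (- a) * (1 + e) \<le> 1 - a / 2"
proof -
  have "0 \<le> a * (1 - a)" using assms by linarith
  then have a: "0 \<le> a" "a \<le> 1" by (auto simp: zero_le_mult_iff)
  have "exp (- a) * (1 + a) \<le> exp (- a) * exp a"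
    using exp_ge_add_one_self[of a] by (intro mult_left_mono) auto
  then have damp: "exp (- a) * (1 + a) \<le> 1" by (simp flip: exp_add)
  have "(1 + a) * (1 - a / 2) = 1 + a * (1 - a) / 2" by (simp add: field_simps)
  then have "exp (- a) * (1 + e) \<le> exp (- a) * ((1 + a) * (1 - a / 2))"
    using assms(2) by (intro mult_left_mono) auto
  also have "\<dots> = (exp (- a) * (1 + a)) * (1 - a / 2)" by simp
  also have "\<dots> \<le> 1 - a / 2" using damp a by (intro mult_left_le_one_le) auto
  finally show ?thesis .
qed

lemma coef_norm_stepS_contraction:
  assumes "trig_poly K \<omega>" and "0 < \<nu>" and "0 < h" and "coef_norm K \<omega> \<le> R"
    and small: "h * ((nonlin_const K * R)\<^sup>2 + \<nu>\<^sup>2 / 2) \<le> \<nu> / 2"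
  shows "coef_norm K (stepS K \<nu> g h \<omega>) \<le> (1 - \<nu> * h / 2) * coef_norm K \<omega> + h * coef_norm K g"
proof -
  let ?r = "coef_norm K \<omega>" and ?e = "h\<^sup>2 * (nonlin_const K * R)\<^sup>2"
  have "(coef_norm K (\<lambda>k. \<omega> k - of_real h * nonlin K \<omega> k))\<^sup>2
      \<le> ?r\<^sup>2 + h\<^sup>2 * (nonlin_const K * ?r\<^sup>2)\<^sup>2"
    unfolding coef_norm_euler_step[OF assms(1)] using coef_norm_nonlin_le
    by (intro add_left_mono mult_left_mono power_mono) auto
  also have "\<dots> = ?r\<^sup>2 + h\<^sup>2 * ?r\<^sup>2 * (nonlin_const K * ?r)\<^sup>2"
    by (simp add: power2_eq_square mult_ac)
  also have "\<dots> \<le> ?r\<^sup>2 + h\<^sup>2 * ?r\<^sup>2 * (nonlin_const K * R)\<^sup>2"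
    using assms(4) by (intro add_left_mono mult_left_mono power_mono) (auto simp: nonlin_const_def)
  also have "\<dots> = ?r\<^sup>2 * (1 + ?e)" by (simp add: algebra_simps)
  also have "\<dots> \<le> ?r\<^sup>2 * (1 + ?e)\<^sup>2"
    using mult_left_mono[of 1 "1 + ?e" "1 + ?e"] by (intro mult_left_mono) (auto simp: power2_eq_square)
  also have "\<dots> = (?r * (1 + ?e))\<^sup>2" by (simp add: power_mult_distrib)
  finally have euler: "coef_norm K (\<lambda>k. \<omega> k - of_real h * nonlin K \<omega> k) \<le> ?r * (1 + ?e)"
    by (rule power2_le_imp_le) simp
  have "?e \<le> (\<nu> * h) * (1 - \<nu> * h) / 2"
    using mult_left_mono[OF small, of h] assms(3) by (simp add: power2_eq_square algebra_simps)
  then have damping: "exp (- \<nu> * h) * (1 + ?e) \<le> 1 - \<nu> * h / 2"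
    using exp_damping_le[of ?e "\<nu> * h"] by simp
  have "exp (- \<nu> * h) * coef_norm K (\<lambda>k. \<omega> k - of_real h * nonlin K \<omega> k)
      \<le> (exp (- \<nu> * h) * (1 + ?e)) * ?r"
    using mult_left_mono[OF euler, of "exp (- \<nu> * h)"] by (simp add: mult_ac)
  also have "\<dots> \<le> (1 - \<nu> * h / 2) * ?r"
    using damping by (rule mult_right_mono) simp
  finally show ?thesis
    using coef_norm_stepS_le[OF assms(2,3), where K = K and g = g and \<omega> = \<omega>] by linarith
qed

lemma iterate_affine_contraction:
  fixes T :: "'a \<Rightarrow> 'a" and r :: "'a \<Rightarrow> real"
  assumes step: "\<And>x. P x \<Longrightarrow> r x \<le> R \<Longrightarrow> P (T x) \<and> r (T x) \<le> \<rho> * r x + (1 - \<rho>) * s"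
    and "0 \<le> \<rho>" and "\<rho> \<le> 1" and "s \<le> R" and "P x" and "r x \<le> R"
  shows "P ((T ^^ n) x) \<and> r ((T ^^ n) x) \<le> R \<and> r ((T ^^ n) x) - s \<le> \<rho> ^ n * (R - s)"
proof (induction n)
  case 0
  then show ?case using assms by simp
next
  case (Suc n)
  let ?y = "(T ^^ n) x"
  have "P (T ?y)" and "r (T ?y) \<le> \<rho> * r ?y + (1 - \<rho>) * s"
    using step Suc.IH by auto
  moreover have "\<rho> * r ?y + (1 - \<rho>) * s \<le> \<rho> * R + (1 - \<rho>) * R"
    using Suc.IH assms by (intro add_mono mult_left_mono) auto
  moreover have "\<rho> * (r ?y - s) \<le> \<rho> * (\<rho> ^ n * (R - s))"
    using Suc.IH assms by (intro mult_left_mono) auto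
  ultimately show ?case by (simp add: algebra_simps)
qed

lemma stepS_eventually_below:
  assumes g: "\<And>k. g (- k) = cnj (g k)" and "0 < \<nu>" and "0 < h"
    and small: "h * ((nonlin_const K * R)\<^sup>2 + \<nu>\<^sup>2 / 2) \<le> \<nu> / 2"
    and below: "2 * coef_norm K g / \<nu> < T" and "T \<le> R"
  shows "\<exists>N. \<forall>\<omega>. trig_poly K \<omega> \<and> coef_norm K \<omega> \<le> R \<longrightarrow>
           (\<forall>n\<ge>N. coef_norm K ((stepS K \<nu> g h ^^ n) \<omega>) < T)"
proof -
  define \<rho> where "\<rho> = 1 - \<nu> * h / 2"
  define s where "s = 2 * coef_norm K g / \<nu>"
  have "h * (\<nu>\<^sup>2 / 2) \<le> h * ((nonlin_const K * R)\<^sup>2 + \<nu>\<^sup>2 / 2)"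
    using assms(3) by (intro mult_left_mono) auto
  then have "(\<nu> * h) * \<nu> \<le> 1 * \<nu>"
    using small by (simp add: power2_eq_square field_simps)
  then have "\<nu> * h \<le> 1" using assms(2) by (rule mult_right_le_imp_le)
  then have \<rho>: "0 \<le> \<rho>" "\<rho> < 1" unfolding \<rho>_def using assms(2,3) by auto
  have "s < T" unfolding s_def using below .
  obtain N where N: "\<rho> ^ N < (T - s) / (R - s)"
    using real_arch_pow_inv[of "(T - s) / (R - s)" \<rho>] \<open>s < T\<close> \<open>T \<le> R\<close> \<rho> by auto
  have step: "trig_poly K (stepS K \<nu> g h \<omega>) \<and>
      coef_norm K (stepS K \<nu> g h \<omega>) \<le> \<rho> * coef_norm K \<omega> + (1 - \<rho>) * s"
    if "trig_poly K \<omega>" "coef_norm K \<omega> \<le> R" for \<omega>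
    using trig_poly_stepS[where g = g, OF that(1) g]
      coef_norm_stepS_contraction[OF that(1) assms(2,3) that(2) small] assms(2)
    unfolding \<rho>_def s_def by simp
  have "coef_norm K ((stepS K \<nu> g h ^^ n) \<omega>) < T"
    if \<omega>: "trig_poly K \<omega>" "coef_norm K \<omega> \<le> R" and "N \<le> n" for \<omega> n
  proof -
    have "coef_norm K ((stepS K \<nu> g h ^^ n) \<omega>) - s \<le> \<rho> ^ n * (R - s)"
      using iterate_affine_contraction[where P = "trig_poly K" and r = "coef_norm K", OF step]
        \<rho> \<open>s < T\<close> \<open>T \<le> R\<close> \<omega> by auto
    also have "\<dots> \<le> \<rho> ^ N * (R - s)"
      using \<rho> \<open>N \<le> n\<close> \<open>s < T\<close> \<open>T \<le> R\<close> by (intro mult_right_mono power_decreasing) auto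
    also have "\<dots> < T - s"
      using N \<open>s < T\<close> \<open>T \<le> R\<close> by (simp add: pos_less_divide_eq)
    finally show ?thesis by simp
  qed
  then show ?thesis by blast
qed

lemma stepS_absorbing_ball:
  assumes g: "\<And>k. g (- k) = cnj (g k)" and "0 < \<nu>" and below: "2 * vnorm K g / \<nu> < B"
  shows "\<forall>L>0. \<exists>h0>0. \<forall>h. 0 < h \<and> h \<le> h0 \<longrightarrow>
           (\<exists>N::nat. \<forall>\<omega>0. trig_poly K \<omega>0 \<and> vnorm K \<omega>0 < L \<longrightarrow>
              (\<forall>n\<ge>N. vnorm K ((stepS K \<nu> g h ^^ n) \<omega>0) < B))"
proof (intro allI impI)
  fix L :: real
  define T where "T = B / (2 * pi)"
  define R where "R = max (L / (2 * pi)) T"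
  define D where "D = (nonlin_const K * R)\<^sup>2 + \<nu>\<^sup>2 / 2"
  define h0 where "h0 = (\<nu> / 2) / D"
  have denom: "0 < D"
    unfolding D_def using assms(2) by (simp add: add_nonneg_pos)
  have gT: "2 * coef_norm K g / \<nu> < T"
    using below unfolding T_def vnorm_eq_coef_norm by (simp add: field_simps)
  have eventually_below: "\<exists>N. \<forall>\<omega>. trig_poly K \<omega> \<and> coef_norm K \<omega> \<le> R \<longrightarrow>
      (\<forall>n\<ge>N. coef_norm K ((stepS K \<nu> g h ^^ n) \<omega>) < T)" if "0 < h" "h \<le> h0" for h
  proof (rule stepS_eventually_below[where g = g, OF g assms(2) that(1)])
    have "h * D \<le> h0 * D"
      using that(2) denom by (intro mult_right_mono) auto
    also have "\<dots> = \<nu> / 2" unfolding h0_def using denom by simp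
    finally show "h * ((nonlin_const K * R)\<^sup>2 + \<nu>\<^sup>2 / 2) \<le> \<nu> / 2" unfolding D_def .
    show "T \<le> R" unfolding R_def by simp
  qed (rule gT)
  have in_ball: "coef_norm K \<omega> \<le> R" if "vnorm K \<omega> < L" for \<omega>
  proof -
    have "coef_norm K \<omega> \<le> L / (2 * pi)"
      using that unfolding vnorm_eq_coef_norm by (simp add: pos_le_divide_eq mult.commute)
    then show ?thesis unfolding R_def by simp
  qed
  have below_iff: "vnorm K \<omega> < B \<longleftrightarrow> coef_norm K \<omega> < T" for \<omega>
    unfolding vnorm_eq_coef_norm T_def by (simp add: pos_less_divide_eq mult.commute)
  have "\<exists>N::nat. \<forall>\<omega>0. trig_poly K \<omega>0 \<and> vnorm K \<omega>0 < L \<longrightarrow>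
      (\<forall>n\<ge>N. vnorm K ((stepS K \<nu> g h ^^ n) \<omega>0) < B)" if h: "0 < h" "h \<le> h0" for h
  proof -
    obtain N where "\<forall>\<omega>. trig_poly K \<omega> \<and> coef_norm K \<omega> \<le> R \<longrightarrow>
        (\<forall>n\<ge>N. coef_norm K ((stepS K \<nu> g h ^^ n) \<omega>) < T)"
      using eventually_below[OF h] by blast
    then show ?thesis unfolding below_iff using in_ball by blast
  qed
  moreover have "0 < h0" unfolding h0_def using assms(2) denom by simp
  ultimately show "\<exists>h0>0. \<forall>h. 0 < h \<and> h \<le> h0 \<longrightarrow>
           (\<exists>N::nat. \<forall>\<omega>0. trig_poly K \<omega>0 \<and> vnorm K \<omega>0 < L \<longrightarrow>
              (\<forall>n\<ge>N. vnorm K ((stepS K \<nu> g h ^^ n) \<omega>0) < B))"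
    by blast
qed

lemma curl_coef_uminus:
  assumes "force_ok K lamM f"
  shows "curl_coef f (- k) = cnj (curl_coef f k)"
proof -
  have "f (- k) = (cnj (fst (f k)), cnj (snd (f k)))"
    using assms unfolding force_ok_def kneg_eq_uminus by blast
  then show ?thesis unfolding curl_coef_def by simp
qed

lemma force_ok_nonzero_mode:
  assumes "force_ok K lamM f" and "f \<noteq> (\<lambda>_. (0, 0))"
  obtains k where "k \<in> Kset K" and "f k \<noteq> (0, 0)"
  using assms unfolding force_ok_def by fastforce

lemma lambda0_eq_1:
  assumes "k \<in> Kset K"
  shows "lambda0 K = 1"
  unfolding lambda0_def
proof (rule Min_eqI)
  have "1 \<le> K" using assms unfolding Kset_def by (cases k) auto
  then show "1 \<in> ksq ` Kset K"
    by (intro image_eqI[of _ _ "(1, 0)"]) (auto simp: Kset_def ksq_def)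
qed (auto simp: ksq_ge_1)

lemma force_norm_pos:
  assumes "force_ok K lamM f" and "f \<noteq> (\<lambda>_. (0, 0))"
  shows "0 < force_norm K f"
proof -
  obtain k where k: "k \<in> Kset K" "f k \<noteq> (0, 0)"
    using force_ok_nonzero_mode[OF assms] .
  then have "0 < (cmod (fst (f k)))\<^sup>2 + (cmod (snd (f k)))\<^sup>2"
    by (cases "f k") (auto simp: add_pos_nonneg add_nonneg_pos)
  also have "\<dots> \<le> (\<Sum>k\<in>Kset K. (cmod (fst (f k)))\<^sup>2 + (cmod (snd (f k)))\<^sup>2)"
    by (rule member_le_sum) (auto simp: k)
  finally show ?thesis unfolding force_norm_def by simp
qed

lemma vnorm_curl_coef_le:
  assumes f: "force_ok K lamM f" and "1 \<le> lamM"
  shows "vnorm K (curl_coef f) \<le> 2 * lamM * force_norm K f"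
proof -
  have mode_le: "(cmod (curl_coef f k))\<^sup>2 \<le> (2 * lamM)\<^sup>2 * ((cmod (fst (f k)))\<^sup>2 + (cmod (snd (f k)))\<^sup>2)"
    for k
  proof (cases "ksq k \<le> lamM")
    case True
    let ?a = "cmod (fst (f k))" and ?b = "cmod (snd (f k))"
    have "\<bar>fst k\<bar> \<le> fst k ^ 2 + snd k ^ 2" "\<bar>snd k\<bar> \<le> fst k ^ 2 + snd k ^ 2"
      using int_abs_le_square[of "fst k"] int_abs_le_square[of "snd k"] by simp_all
    then have k: "\<bar>real_of_int (fst k)\<bar> \<le> lamM" "\<bar>real_of_int (snd k)\<bar> \<le> lamM"
      using True unfolding ksq_def by linarith+
    have "cmod (curl_coef f k)
        \<le> cmod (\<i> * of_int (fst k) * snd (f k)) + cmod (\<i> * of_int (snd k) * fst (f k))"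
      unfolding curl_coef_def by (rule norm_triangle_ineq4)
    also have "\<dots> = \<bar>real_of_int (fst k)\<bar> * ?b + \<bar>real_of_int (snd k)\<bar> * ?a"
      by (simp add: norm_mult)
    also have "\<dots> \<le> lamM * ?b + lamM * ?a"
      using k by (intro add_mono mult_right_mono) simp_all
    finally have "cmod (curl_coef f k) \<le> lamM * (?a + ?b)" by (simp add: algebra_simps)
    then have "(cmod (curl_coef f k))\<^sup>2 \<le> (lamM * (?a + ?b))\<^sup>2"
      by (rule power_mono) simp
    also have "\<dots> = lamM\<^sup>2 * (?a + ?b)\<^sup>2" by (simp add: power_mult_distrib)
    also have "\<dots> \<le> lamM\<^sup>2 * (4 * (?a\<^sup>2 + ?b\<^sup>2))"
      by (rule mult_left_mono) (smt (verit) power2_sum sum_squares_bound zero_le_power2, simp)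
    also have "\<dots> = (2 * lamM)\<^sup>2 * (?a\<^sup>2 + ?b\<^sup>2)" by (simp add: power_mult_distrib)
    finally show ?thesis .
  next
    case False
    then have "lamM < ksq k" by simp
    then have "f k = (0, 0)" using f unfolding force_ok_def by blast
    then show ?thesis unfolding curl_coef_def by simp
  qed
  have "vnorm K (curl_coef f)
      \<le> 2 * pi * sqrt (\<Sum>k\<in>Kset K. (2 * lamM)\<^sup>2 * ((cmod (fst (f k)))\<^sup>2 + (cmod (snd (f k)))\<^sup>2))"
    unfolding vnorm_eq_coef_norm coef_norm_def L2_set_def
    by (intro mult_left_mono real_sqrt_le_mono sum_mono mode_le) simp_all
  also have "\<dots> = 2 * lamM * force_norm K f"
    using assms(2) unfolding force_norm_def by (simp add: sum_distrib_left[symmetric] real_sqrt_mult)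
  finally show ?thesis .
qed

theorem lemma1:
  fixes \<nu> lamM c0 :: real and K :: nat and f :: "int \<times> int \<Rightarrow> complex \<times> complex"
  assumes "\<nu> > 0" and "lamM \<ge> 1" and "force_ok K lamM f" and "f \<noteq> (\<lambda>_. (0, 0))"
    and "c0 > 6 * lamM / lambda0 K"
  shows "\<forall>L>0. \<exists>h0>0. \<forall>h. 0 < h \<and> h \<le> h0 \<longrightarrow>
           (\<exists>N::nat. \<forall>\<omega>0. trig_poly K \<omega>0 \<and> vnorm K \<omega>0 < L \<longrightarrow>
              (\<forall>n\<ge>N. vnorm K ((stepS K \<nu> (curl_coef f) h ^^ n) \<omega>0)
                        < c0 * force_norm K f / (\<nu> * sqrt (lambda0 K))))"
proof (rule stepS_absorbing_ball)
  obtain k where "k \<in> Kset K" using force_ok_nonzero_mode[OF assms(3,4)] .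
  then have "lambda0 K = 1" by (rule lambda0_eq_1)
  then have c0: "4 * lamM < c0" using assms(2,5) by simp
  have "2 * vnorm K (curl_coef f) \<le> 4 * lamM * force_norm K f"
    using vnorm_curl_coef_le[OF assms(3,2)] by simp
  also have "\<dots> < c0 * force_norm K f"
    using c0 force_norm_pos[OF assms(3,4)] by simp
  finally show "2 * vnorm K (curl_coef f) / \<nu> < c0 * force_norm K f / (\<nu> * sqrt (lambda0 K))"
    using assms(1) \<open>lambda0 K = 1\<close> by (simp add: divide_strict_right_mono)
qed (use assms curl_coef_uminus in auto)

end
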